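(* Let $N \ge 1$ and let $W_N$ be the set of binary words of length $N$. Define $\varphi_1 : W_N \to W_N$ by $\varphi_1(u) = 1^p v 0$ if $u = v 0 1^p$ for some (possibly empty) word $v$ and some $p \geq 1$, and $\varphi_1(u) = u$ otherwise. Then $|P(\varphi_1(u))| = |P(u)|$ for every $u \in W_N$.
   Context: For a binary word $x$, $x^j$ denotes $j$ concatenated copies of $x$, and juxtaposition denotes concatenation. For a binary word $w = w_1 \cdots w_\ell$ of length $\ell$, $P(w)$ is the set of indices $i \geq 2$ such that at least one of the following holds: (i) $\ell \geq i$ and $w_{i-1} w_i = 00$; (ii) $\ell \geq i+2$ and $w_{i-1} w_i w_{i+1} w_{i+2} = 0100$; (iii) $\ell \geq i+3$ and $w_{i-1} \cdots w_{i+3} = 01010$. *)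

theory Defs
  imports Main
begin

(* Binary words: lists of bool, with False = 0 and True = 1.
   Letters are 1-indexed: w_i = w ! (i - 1). *)

definition Pset :: "bool list \<Rightarrow> nat set" where
  "Pset w = {i. i \<ge> 2 \<and>
     ((length w \<ge> i \<and> w ! (i-2) = False \<and> w ! (i-1) = False)
    \<or> (length w \<ge> i + 2 \<and> w ! (i-2) = False \<and> w ! (i-1) = True
        \<and> w ! i = False \<and> w ! (i+1) = False)
    \<or> (length w \<ge> i + 3 \<and> w ! (i-2) = False \<and> w ! (i-1) = True
        \<and> w ! i = False \<and> w ! (i+1) = True \<and> w ! (i+2) = False))}"

definition phi1 :: "bool list \<Rightarrow> bool list" where
  "phi1 u = (if \<exists>v p. p \<ge> 1 \<and> u = v @ [False] @ replicate p True
             then (SOME w. \<exists>v p. p \<ge> 1 \<and> u = v @ [False] @ replicate p True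
                                  \<and> w = replicate p True @ v @ [False])
             else u)"

end

theory Submission
  imports Defs
begin

text \<open>Each of the patterns 00, 0100, 01010 defining P starts and ends with 0. Hence 1s appended
  after a final 0 create no new index, and prepending \<open>1\<^sup>p\<close> merely shifts every index by p.
  So for \<open>u = v 0 1\<^sup>p\<close> the set \<open>P(\<phi>\<^sub>1(u)) = P(1\<^sup>p v 0)\<close> is the translate by p of
  \<open>P(v 0) = P(u)\<close>.\<close>

lemma Pset_append_replicate_True:
  assumes "w \<noteq> []" and "last w = False"
  shows "Pset (w @ replicate p True) = Pset w"
  unfolding Pset_def
  by (rule Collect_cong) (use assms in \<open>auto simp: nth_append split: if_splits\<close>)

lemma Pset_replicate_True_append_ge:
  "i \<in> Pset (replicate p True @ w) \<Longrightarrow> p + 2 \<le> i"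
  unfolding Pset_def by (auto simp: nth_append split: if_splits)

lemma add_mem_Pset_replicate_True_append_iff:
  "j + p \<in> Pset (replicate p True @ w) \<longleftrightarrow> j \<in> Pset w"
proof (cases "2 \<le> j")
  case True
  then obtain k where j: "j = k + 2" by (metis add.commute le_Suc_ex)
  have "k + 2 + p - 2 = k + p" "k + 2 + p - 1 = k + 1 + p" "k + 2 + p + 1 = (k + 3) + p"
    by simp_all
  then show ?thesis unfolding j Pset_def by (simp add: nth_append eval_nat_numeral)
next
  case False
  then show ?thesis unfolding Pset_def by (auto simp: nth_append split: if_splits)
qed

lemma Pset_replicate_True_append:
  "Pset (replicate p True @ w) = (\<lambda>i. i + p) ` Pset w"
proof (intro set_eqI iffI)
  fix i assume i: "i \<in> Pset (replicate p True @ w)"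
  then obtain j where "i = j + p"
    using Pset_replicate_True_append_ge by (metis add.commute le_add1 le_add_diff_inverse2 le_trans)
  with i show "i \<in> (\<lambda>i. i + p) ` Pset w"
    using add_mem_Pset_replicate_True_append_iff by blast
next
  fix i assume "i \<in> (\<lambda>i. i + p) ` Pset w"
  then show "i \<in> Pset (replicate p True @ w)"
    using add_mem_Pset_replicate_True_append_iff by blast
qed

lemma card_Pset_replicate_True_append:
  "card (Pset (replicate p True @ w)) = card (Pset w)"
  unfolding Pset_replicate_True_append by (rule card_image) (simp add: inj_on_def)

lemma phi1_cases:
  obtains "phi1 u = u"
  | v p where "u = (v @ [False]) @ replicate p True" and "phi1 u = replicate p True @ v @ [False]"
proof (cases "\<exists>v p. p \<ge> 1 \<and> u = v @ [False] @ replicate p True")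
  case True
  let ?Q = "\<lambda>w. \<exists>v p. p \<ge> 1 \<and> u = v @ [False] @ replicate p True
                       \<and> w = replicate p True @ v @ [False]"
  have "?Q (SOME w. ?Q w)"
    by (rule someI_ex) (use True in blast)
  moreover have "phi1 u = (SOME w. ?Q w)"
    using True unfolding phi1_def by simp
  ultimately show ?thesis
    using that(2) by auto
next
  case False
  have "phi1 u = u"
    unfolding phi1_def by (rule if_not_P[OF False])
  then show ?thesis by (rule that(1))
qed

theorem lemma4p1:
  fixes N :: nat and u :: "bool list"
  assumes "N \<ge> 1" and "length u = N"
  shows "card (Pset (phi1 u)) = card (Pset u)"
proof (cases u rule: phi1_cases)
  case 1
  then show ?thesis by simp
next
  case (2 v p)
  have "card (Pset (phi1 u)) = card (Pset (v @ [False]))"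
    using 2(2) card_Pset_replicate_True_append by simp
  also have "\<dots> = card (Pset u)"
    unfolding 2(1) by (subst Pset_append_replicate_True) simp_all
  finally show ?thesis .
qed

end
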